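(* Let $s\ge2$ and let $\mathbb{R}^{2s}$ have basis $\{U_1,\dots,U_s,T_1,\dots,T_s\}$. Let $B_{2,s}$ be the algebraic curvature tensor on $\mathbb{R}^{2s}$ with $B_{2,s}(U_i,U_j,U_k,T_l)=\delta_{il}\delta_{jk}-\delta_{ik}\delta_{jl}$ and all components on basis vectors not obtained from these via the symmetries $B(x,y,z,w)=-B(y,x,z,w)=B(z,w,x,y)$ equal to zero. Then: (1) If $\xi_1,\xi_2\in\mathbb{R}^{2s}$ are non-zero and $B_{2,s}(\xi_1,\xi_2,\eta_1,\eta_2)=0$ and $B_{2,s}(\xi_1,\eta_1,\eta_2,\xi_2)=0$ for all $\eta_1,\eta_2\in\mathbb{R}^{2s}$, then $\xi_1,\xi_2\in\operatorname{Span}\{T_1,\dots,T_s\}$. (2) $(\mathbb{R}^{2s},B_{2,s})$ is irreducible: there is no decomposition $\mathbb{R}^{2s}=W_1\oplus W_2$ with $W_1,W_2\ne0$ such that $B_{2,s}(x_1,x_2,x_3,x_4)=0$ whenever some argument lies in $W_1$ and another lies in $W_2$.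
   Context: An algebraic curvature tensor is a $4$-tensor $A$ with $A(x,y,z,w)=-A(y,x,z,w)=A(z,w,x,y)$ and $A(x,y,z,w)+A(y,z,x,w)+A(z,x,y,w)=0$. *)

theory Defs
  imports "HOL-Analysis.Analysis"
begin

text \<open>The model space R^(2s) is real^('s + 's); the basis vector U_i is
  axis (Inl i) 1 and T_i is axis (Inr i) 1.\<close>

definition kdelta :: "'s \<Rightarrow> 's \<Rightarrow> real" where
  "kdelta i j = (if i = j then 1 else 0)"

text \<open>Delta i j k l = B(U_i,U_j,U_k,T_l) = delta_il delta_jk - delta_ik delta_jl\<close>
definition Bval :: "'s \<Rightarrow> 's \<Rightarrow> 's \<Rightarrow> 's \<Rightarrow> real" where
  "Bval i j k l = kdelta i l * kdelta j k - kdelta i k * kdelta j l"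

text \<open>Components of B_{2,s} on basis vectors: the given ones and those obtained
  from them by the symmetries; all others zero.\<close>
fun Bcomp :: "'s + 's \<Rightarrow> 's + 's \<Rightarrow> 's + 's \<Rightarrow> 's + 's \<Rightarrow> real" where
  "Bcomp (Inl i) (Inl j) (Inl k) (Inr l) = Bval i j k l"
| "Bcomp (Inl i) (Inl j) (Inr l) (Inl k) = - Bval i j k l"
| "Bcomp (Inl k) (Inr l) (Inl i) (Inl j) = Bval i j k l"
| "Bcomp (Inr l) (Inl k) (Inl i) (Inl j) = - Bval i j k l"
| "Bcomp _ _ _ _ = 0"

definition B2s :: "real ^ ('s::finite + 's) \<Rightarrow> real ^ ('s + 's) \<Rightarrow> real ^ ('s + 's)
                    \<Rightarrow> real ^ ('s + 's) \<Rightarrow> real" where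
  "B2s x y z w = (\<Sum>a\<in>UNIV. \<Sum>b\<in>UNIV. \<Sum>c\<in>UNIV. \<Sum>d\<in>UNIV.
      x $ a * y $ b * z $ c * w $ d * Bcomp a b c d)"

end

(*
  Evaluating B(x, U_p, T_q, w) and B(x, U_p, U_q, w) shows that if B(x, -, -, w) vanishes,
  then the outer products of the U-part of x with the U-part and with the T-part of w are
  scalar multiples of the identity; in dimension s >= 2 such a rank-one matrix is zero.
  So for w <> 0 the U-part of x vanishes, and by the symmetry B(x,y,z,w) = B(w,z,y,x) the
  same holds with x and w exchanged. In a splitting W1 + W2 annihilated by B both summands
  therefore lie in Span{T_i}, which does not contain U_i.
*)
theory Submission
  imports Defs
begin

abbreviation ubasis :: "'s \<Rightarrow> real ^ ('s::finite + 's)" where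
  "ubasis i \<equiv> axis (Inl i) 1"

abbreviation tbasis :: "'s \<Rightarrow> real ^ ('s::finite + 's)" where
  "tbasis i \<equiv> axis (Inr i) 1"

lemma mult_if_real:
  "(if P then a else b) * (c::real) = (if P then a * c else b * c)"
  "(c::real) * (if P then a else b) = (if P then c * a else c * b)"
  by simp_all

lemma sum_if_const_zero:
  "(\<Sum>d\<in>A. if P then f d else (0::'a::comm_monoid_add)) = (if P then sum f A else 0)"
  by simp

lemma sum_UNIV_Plus:
  "sum f (UNIV :: ('a::finite + 'b::finite) set) = (\<Sum>i\<in>UNIV. f (Inl i)) + (\<Sum>i\<in>UNIV. f (Inr i))"
  by (subst UNIV_Plus_UNIV[symmetric], subst sum.Plus) (auto simp: comp_def)

lemma sum_reverse4:
  fixes F :: "'a::finite \<Rightarrow> 'b::finite \<Rightarrow> 'c::finite \<Rightarrow> 'd::finite \<Rightarrow> 'e::comm_monoid_add"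
  shows "(\<Sum>d\<in>UNIV. \<Sum>c\<in>UNIV. \<Sum>b\<in>UNIV. \<Sum>a\<in>UNIV. F a b c d)
       = (\<Sum>a\<in>UNIV. \<Sum>b\<in>UNIV. \<Sum>c\<in>UNIV. \<Sum>d\<in>UNIV. F a b c d)"
  \<comment> \<open>each swap only moves an earlier type outwards, otherwise the simplifier loops\<close>
  by (simp only: sum.swap[of _ "UNIV::'b set" "UNIV::'a set"] sum.swap[of _ "UNIV::'c set" "UNIV::'a set"]
      sum.swap[of _ "UNIV::'d set" "UNIV::'a set"] sum.swap[of _ "UNIV::'c set" "UNIV::'b set"]
      sum.swap[of _ "UNIV::'d set" "UNIV::'b set"] sum.swap[of _ "UNIV::'d set" "UNIV::'c set"])

lemma Bcomp_reverse: "Bcomp d c b a = Bcomp a b c d"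
  by (cases a; cases b; cases c; cases d) (auto simp: Bval_def kdelta_def)

lemma B2s_reverse: "B2s w z y x = B2s x y z w"
  unfolding B2s_def
  by (subst sum_reverse4[symmetric]) (simp add: Bcomp_reverse mult_ac)

lemma B2s_basis_middle:
  "B2s x (axis b 1) (axis c 1) w = (\<Sum>a\<in>UNIV. \<Sum>d\<in>UNIV. x $ a * w $ d * Bcomp a b c d)"
  unfolding B2s_def axis_def
  by (simp add: mult_if_real sum_if_const_zero sum.delta sum.delta' cong: if_cong)

lemma B2s_U_T:
  "B2s x (ubasis p) (tbasis q) w =
     (if p = q then (\<Sum>i\<in>UNIV. x $ Inl i * w $ Inl i) else 0) - x $ Inl q * w $ Inl p"
  unfolding B2s_basis_middle
  by (simp add: sum_UNIV_Plus Bval_def kdelta_def algebra_simps mult_if_real sum_if_const_zero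
      sum.delta sum.delta' sum_subtractf sum.distrib cong: if_cong)

lemma B2s_U_U:
  "B2s x (ubasis p) (ubasis q) w =
     (if p = q then (\<Sum>i\<in>UNIV. x $ Inl i * w $ Inr i) else 0) - x $ Inl q * w $ Inr p
     - x $ Inr q * w $ Inl p + (if p = q then (\<Sum>i\<in>UNIV. x $ Inr i * w $ Inl i) else 0)"
  unfolding B2s_basis_middle
  by (simp add: sum_UNIV_Plus Bval_def kdelta_def algebra_simps mult_if_real sum_if_const_zero
      sum.delta sum.delta' sum_subtractf sum.distrib cong: if_cong)

lemma exists_other_if_card_ge_2:
  assumes "CARD('s::finite) \<ge> 2"
  shows "\<exists>r::'s. r \<noteq> q"
  using assms by (metis UNIV_I card_le_Suc0_iff_eq finite not_less_eq_eq numeral_2_eq_2)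

lemma outer_product_scalar_identity_zero:
  fixes a b :: "'s::finite \<Rightarrow> real"
  assumes card: "CARD('s) \<ge> 2" and ab: "\<And>p q. a q * b p = (if p = q then c else 0)"
  shows "a q * b p = 0"
proof -
  obtain r where "r \<noteq> q" using exists_other_if_card_ge_2[OF card] by blast
  have "c * c = (a q * b q) * (a r * b r)" using ab[of q q] ab[of r r] by simp
  also have "\<dots> = (a q * b r) * (a r * b q)" by (simp add: mult_ac)
  also have "\<dots> = 0" using ab[of r q] \<open>r \<noteq> q\<close> by simp
  finally have "c = 0" by simp
  then show ?thesis using ab[where p=p and q=q] by simp
qed

lemma U_coord_zero_if_B2s_vanish:
  fixes x w :: "real ^ ('s::finite + 's)"
  assumes card: "CARD('s) \<ge> 2" and "w \<noteq> 0" and vanish: "\<And>\<eta>1 \<eta>2. B2s x \<eta>1 \<eta>2 w = 0"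
  shows "x $ Inl q = 0"
proof (rule ccontr)
  assume xq: "x $ Inl q \<noteq> 0"
  have "x $ Inl q * w $ Inl p = 0" for p
  proof (rule outer_product_scalar_identity_zero[OF card])
    show "x $ Inl q' * w $ Inl p' = (if p' = q' then \<Sum>i\<in>UNIV. x $ Inl i * w $ Inl i else 0)" for p' q'
      using vanish[of "ubasis p'" "tbasis q'"] by (simp add: B2s_U_T)
  qed
  then have wU: "w $ Inl p = 0" for p using xq by simp
  have "x $ Inl q * w $ Inr p = 0" for p
  proof (rule outer_product_scalar_identity_zero[OF card])
    show "x $ Inl q' * w $ Inr p' = (if p' = q' then \<Sum>i\<in>UNIV. x $ Inl i * w $ Inr i else 0)" for p' q'
      using vanish[of "ubasis p'" "ubasis q'"] by (simp add: B2s_U_U wU split: if_splits)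
  qed
  then have wT: "w $ Inr p = 0" for p using xq by simp
  have "w = 0"
    by (simp add: vec_eq_iff) (metis wU wT sum.exhaust)
  with \<open>w \<noteq> 0\<close> show False ..
qed

lemma in_span_tbasis_if_U_coords_zero:
  fixes x :: "real ^ ('s::finite + 's)"
  assumes "\<And>i. x $ Inl i = 0"
  shows "x \<in> span (range tbasis)"
proof -
  have "x = (\<Sum>i\<in>UNIV. x $ Inr i *\<^sub>R tbasis i)"
    unfolding vec_eq_iff
  proof
    fix a
    show "x $ a = (\<Sum>i\<in>UNIV. x $ Inr i *\<^sub>R tbasis i) $ a"
      using assms by (cases a) (auto simp: axis_def mult_if_real sum.delta cong: if_cong)
  qed
  also have "\<dots> \<in> span (range tbasis)"
    by (intro span_sum span_mul span_base) auto
  finally show ?thesis .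
qed

lemma B2s_no_annihilating_splitting:
  fixes W1 W2 :: "(real ^ ('s::finite + 's)) set"
  assumes card: "CARD('s) \<ge> 2"
    and "x0 \<in> W1" "x0 \<noteq> 0" "y0 \<in> W2" "y0 \<noteq> 0"
    and spans: "{x + y | x y. x \<in> W1 \<and> y \<in> W2} = UNIV"
    and vanish: "\<And>x y \<eta>1 \<eta>2. x \<in> W1 \<Longrightarrow> y \<in> W2 \<Longrightarrow> B2s x \<eta>1 \<eta>2 y = 0"
  shows False
proof -
  have W1: "x $ Inl i = 0" if "x \<in> W1" for x i
    using U_coord_zero_if_B2s_vanish[OF card \<open>y0 \<noteq> 0\<close>] vanish[OF that \<open>y0 \<in> W2\<close>] by blast
  have W2: "y $ Inl i = 0" if "y \<in> W2" for y i
    using U_coord_zero_if_B2s_vanish[OF card \<open>x0 \<noteq> 0\<close>] vanish[OF \<open>x0 \<in> W1\<close> that]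
    by (metis B2s_reverse)
  have "ubasis i \<noteq> x + y" if "x \<in> W1" "y \<in> W2" for x y i
  proof
    assume "ubasis i = x + y"
    then have "(1::real) = x $ Inl i + y $ Inl i" by (metis axis_nth vector_add_component)
    with W1[OF that(1)] W2[OF that(2)] show False by simp
  qed
  with spans show False by blast
qed

theorem lemma4p2:
  fixes s_type :: "'s::finite itself"
  assumes "CARD('s) \<ge> 2"
  shows "(\<forall>\<xi>1 \<xi>2 :: real ^ ('s + 's).
            \<xi>1 \<noteq> 0 \<and> \<xi>2 \<noteq> 0 \<and>
            (\<forall>\<eta>1 \<eta>2. B2s \<xi>1 \<xi>2 \<eta>1 \<eta>2 = 0 \<and> B2s \<xi>1 \<eta>1 \<eta>2 \<xi>2 = 0) \<longrightarrow>
            \<xi>1 \<in> span (range (\<lambda>i::'s. axis (Inr i) 1)) \<and>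
            \<xi>2 \<in> span (range (\<lambda>i::'s. axis (Inr i) 1)))
       \<and> \<not> (\<exists>W1 W2 :: (real ^ ('s + 's)) set.
            subspace W1 \<and> subspace W2 \<and> W1 \<noteq> {0} \<and> W2 \<noteq> {0} \<and>
            W1 \<inter> W2 = {0} \<and> {x + y | x y. x \<in> W1 \<and> y \<in> W2} = UNIV \<and>
            (\<forall>x1 x2 x3 x4. (\<exists>i j. i < 4 \<and> j < 4 \<and> i \<noteq> j \<and>
                   [x1, x2, x3, x4] ! i \<in> W1 \<and> [x1, x2, x3, x4] ! j \<in> W2)
                 \<longrightarrow> B2s x1 x2 x3 x4 = 0))"
proof ((rule conjI; intro allI impI notI), goal_cases)
  case (1 \<xi>1 \<xi>2)
  then have "\<xi>1 \<noteq> 0" "\<xi>2 \<noteq> 0" and vanish: "\<And>\<eta>1 \<eta>2. B2s \<xi>1 \<eta>1 \<eta>2 \<xi>2 = 0" by blast+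
  then have "B2s \<xi>2 \<eta>1 \<eta>2 \<xi>1 = 0" for \<eta>1 \<eta>2 by (metis B2s_reverse)
  with vanish \<open>\<xi>1 \<noteq> 0\<close> \<open>\<xi>2 \<noteq> 0\<close> show ?case
    by (blast intro: in_span_tbasis_if_U_coords_zero U_coord_zero_if_B2s_vanish[OF assms])
next
  case 2
  then obtain W1 W2 :: "(real ^ ('s + 's)) set"
    where "subspace W1" "subspace W2" "W1 \<noteq> {0}" "W2 \<noteq> {0}"
      and spans: "{x + y | x y. x \<in> W1 \<and> y \<in> W2} = UNIV"
      and annihilates: "\<forall>x1 x2 x3 x4. (\<exists>i j. i < 4 \<and> j < 4 \<and> i \<noteq> j \<and>
                   [x1, x2, x3, x4] ! i \<in> W1 \<and> [x1, x2, x3, x4] ! j \<in> W2)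
                 \<longrightarrow> B2s x1 x2 x3 x4 = 0"
    by blast
  have vanish: "B2s x \<eta>1 \<eta>2 y = 0" if "x \<in> W1" "y \<in> W2" for x y \<eta>1 \<eta>2
    using that by (intro annihilates[rule_format, of x \<eta>1 \<eta>2 y] exI[of _ 0] exI[of _ 3])
      (simp add: numeral_3_eq_3)
  obtain x0 y0 where "x0 \<in> W1" "x0 \<noteq> 0" "y0 \<in> W2" "y0 \<noteq> 0"
    using \<open>W1 \<noteq> {0}\<close> \<open>W2 \<noteq> {0}\<close> subspace_0[OF \<open>subspace W1\<close>] subspace_0[OF \<open>subspace W2\<close>]
    by blast
  show ?case by (rule B2s_no_annihilating_splitting[OF assms _ _ _ _ spans vanish]) fact+
qed

end
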